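(* Let $\mathcal X=\{X_1,\dots,X_n\}$, $n\in\mathbb N$, be a multi-set of real symmetric $2\times2$ matrices, and let $\lambda_1$ be the unique largest eigenvalue of all matrices of $\mathcal X$, belonging to $X_1$, with normalised eigenvector $u_1$. Then the log-exp-supremum of $\mathcal X$ has the representation $$S=\lim_{m\to\infty}\frac1m\log\sum_{i=1}^n\exp(mX_i)=\lambda_1u_1u_1^{\mathsf T}+\mu_*v_1v_1^{\mathsf T},$$ where $v_1$ is the normalised vector perpendicular to $u_1$ and $\mu_*$ is the largest eigenvalue of $\mathcal X$ (other than the occurrence $\lambda_1$) whose associated normalised eigenvector is not aligned with $u_1$.
   Context: $\exp$ and $\log$ denote the matrix exponential and matrix logarithm. Every real symmetric $2\times2$ matrix $X_i$ is written in spectral form $X_i=\lambda_i u_iu_i^{\mathsf T}+\mu_i v_iv_i^{\mathsf T}$ with $\lambda_i\ge\mu_i$, $u_i=(\cos\varphi_i,\sin\varphi_i)^{\mathsf T}$, $v_i=(-\sin\varphi_i,\cos\varphi_i)^{\mathsf T}$, $\varphi_i\in[-\pi/2,\pi/2]$. "The eigenvalues of $\mathcal X$" means the multi-set of all $2n$ numbers $\lambda_1,\mu_1,\dots,\lambda_n,\mu_n$, each with its associated eigenvector ($u_i$ for $\lambda_i$, $v_i$ for $\mu_i$); an eigenvalue is unique if it occurs exactly once in this multi-set. Two unit vectors are aligned if they are equal up to sign. The log-exp-supremum (LES) of $\mathcal X$ is $\mathrm{Sup}_{\mathrm{LE}}(\mathcal X):=\lim_{m\to\infty}\frac1m\log\sum_{i=1}^n\exp(mX_i)$.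 *)

theory Defs
  imports "HOL-Analysis.Analysis"
begin

type_synonym mat2 = "real^2^2"

primrec mpow :: "mat2 \<Rightarrow> nat \<Rightarrow> mat2" where
  "mpow A 0 = mat 1"
| "mpow A (Suc k) = A ** mpow A k"

definition mexp :: "mat2 \<Rightarrow> mat2" where
  "mexp A = (\<Sum>k. (1 / fact k) *\<^sub>R mpow A k)"

definition mlog :: "mat2 \<Rightarrow> mat2" where
  "mlog M = (THE L. transpose L = L \<and> mexp L = M)"

definition is_LES :: "nat \<Rightarrow> (nat \<Rightarrow> mat2) \<Rightarrow> mat2 \<Rightarrow> bool" where
  "is_LES n X S \<longleftrightarrow>
     ((\<lambda>m::real. (1 / m) *\<^sub>R mlog (\<Sum>i\<in>{1..n}. mexp (m *\<^sub>R X i))) \<longlongrightarrow> S) at_top"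

definition outer :: "real^2 \<Rightarrow> mat2" where
  "outer u = (\<chi> i j. u $ i * u $ j)"

definition uvec :: "real \<Rightarrow> real^2" where
  "uvec \<phi> = vector [cos \<phi>, sin \<phi>]"

definition vvec :: "real \<Rightarrow> real^2" where
  "vvec \<phi> = vector [- sin \<phi>, cos \<phi>]"

definition aligned :: "real^2 \<Rightarrow> real^2 \<Rightarrow> bool" where
  "aligned a b \<longleftrightarrow> a = b \<or> a = - b"

end

theory Submission
  imports Defs
begin

text \<open>Write the sum of the \<open>exp (m X\<^sub>i)\<close> as a sum of rank-one matrices
  \<open>exp (m e\<^sub>k) w\<^sub>k w\<^sub>k\<^sup>T\<close> over all \<open>2n\<close> eigenpairs. Its trace grows like
  \<open>exp (m \<lambda>\<^sub>1)\<close>; by Cauchy--Binet its determinant is a sum of terms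
  \<open>exp (m (e\<^sub>k + e\<^sub>l))\<close> weighted by the squared wedge product of \<open>w\<^sub>k\<close> and \<open>w\<^sub>l\<close>,
  so only pairs of non-aligned eigenvectors contribute and it grows like
  \<open>exp (m (\<lambda>\<^sub>1 + \<mu>\<^sub>*))\<close>. Hence the two eigenvalues grow like \<open>exp (m \<lambda>\<^sub>1)\<close>
  and \<open>exp (m \<mu>\<^sub>*)\<close>, while the spectral projection of the larger one converges to
  \<open>u\<^sub>1 u\<^sub>1\<^sup>T\<close>, the limit of the sum rescaled by \<open>exp (- m \<lambda>\<^sub>1)\<close>. Taking
  logarithms of the eigenvalues and dividing by \<open>m\<close> gives the limit.\<close>

section \<open>Two-by-two matrices\<close>

lemma mat2_eq_iff:
  "(A::mat2) = B \<longleftrightarrow> A$1$1 = B$1$1 \<and> A$1$2 = B$1$2 \<and> A$2$1 = B$2$1 \<and> A$2$2 = B$2$2"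
  by (auto simp: vec_eq_iff forall_2)

lemma matrix_matrix_mult_2: "((A::mat2) ** B)$i$j = A$i$1 * B$1$j + A$i$2 * B$2$j"
  by (simp add: matrix_matrix_mult_def sum_2)

lemma mat_2_nth [simp]:
  "(mat a :: mat2)$1$1 = a" "(mat a :: mat2)$1$2 = 0" "(mat a :: mat2)$2$1 = 0" "(mat a :: mat2)$2$2 = a"
  by (simp_all add: mat_def)

lemma trace_2: "trace (A::mat2) = A$1$1 + A$2$2"
  by (simp add: trace_def sum_2)

lemma symmetric_2_iff: "transpose (A::mat2) = A \<longleftrightarrow> A$2$1 = A$1$2"
  by (auto simp: mat2_eq_iff transpose_def)

lemma outer_nth [simp]: "outer u $ i $ j = u$i * u$j"
  by (simp add: outer_def)

lemma uvec_nth [simp]: "uvec p $ 1 = cos p" "uvec p $ 2 = sin p"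
  by (simp_all add: uvec_def)

lemma vvec_nth [simp]: "vvec p $ 1 = - sin p" "vvec p $ 2 = cos p"
  by (simp_all add: vvec_def)

lemma inner_2: "(a::real^2) \<bullet> b = a$1 * b$1 + a$2 * b$2"
  by (simp add: inner_vec_def sum_2)

lemma matrix_add_rdistrib: "((A::'a::semiring_1^'n^'m) + B) ** C = A ** C + B ** C"
  by (vector matrix_matrix_mult_def sum.distrib[symmetric] field_simps)

lemma matrix_diff_ldistrib: "(A::'a::ring_1^'n^'m) ** (B - C) = A ** B - A ** C"
  by (vector matrix_matrix_mult_def sum_subtractf[symmetric] field_simps)

lemma matrix_diff_rdistrib: "((A::'a::ring_1^'n^'m) - B) ** C = A ** C - B ** C"
  by (vector matrix_matrix_mult_def sum_subtractf[symmetric] field_simps)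

lemma matrix_scaleR_left: "(k *\<^sub>R (A::real^'n^'m)) ** B = k *\<^sub>R (A ** B)"
  by (simp add: scalar_matrix_assoc)

lemma matrix_scaleR_right: "(A::real^'n^'m) ** (k *\<^sub>R B) = k *\<^sub>R (A ** B)"
  by (simp add: matrix_scalar_ac scalar_matrix_assoc)

lemmas matrix_bilinear = matrix_add_ldistrib matrix_add_rdistrib matrix_diff_ldistrib
  matrix_diff_rdistrib matrix_scaleR_left matrix_scaleR_right

section \<open>Spectral decompositions and the matrix logarithm\<close>

lemma idempotent_complement:
  fixes P :: "real^'n^'n"
  assumes "P ** P = P"
  shows "P ** (mat 1 - P) = 0" "(mat 1 - P) ** P = 0" "(mat 1 - P) ** (mat 1 - P) = mat 1 - P"
  using assms by (simp_all add: matrix_bilinear)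

lemma spectral_combination_eq_0:
  fixes P :: "real^'n^'n"
  assumes "P ** P = P" "P \<noteq> 0" "P \<noteq> mat 1" and "x *\<^sub>R P + y *\<^sub>R (mat 1 - P) = 0"
  shows "x = 0" "y = 0"
proof -
  have "P ** (x *\<^sub>R P + y *\<^sub>R (mat 1 - P)) = x *\<^sub>R P"
    "(mat 1 - P) ** (x *\<^sub>R P + y *\<^sub>R (mat 1 - P)) = y *\<^sub>R (mat 1 - P)"
    using idempotent_complement[OF assms(1)] assms(1) by (simp_all add: matrix_add_ldistrib matrix_scaleR_right)
  then show "x = 0" "y = 0" using assms by auto
qed

lemma spectral_mult:
  fixes P :: "real^'n^'n"
  assumes "P ** P = P"
  shows "(x *\<^sub>R P + y *\<^sub>R (mat 1 - P)) ** (x' *\<^sub>R P + y' *\<^sub>R (mat 1 - P))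
    = (x * x') *\<^sub>R P + (y * y') *\<^sub>R (mat 1 - P)"
  by (simp add: matrix_add_ldistrib matrix_add_rdistrib matrix_scaleR_left matrix_scaleR_right
      idempotent_complement[OF assms] assms mult.commute)

lemma spectral_decomposition_unique:
  fixes P P' :: "real^'n^'n"
  assumes P: "P ** P = P" "P \<noteq> 0" "P \<noteq> mat 1"
    and P': "P' ** P' = P'" "P' \<noteq> 0" "P' \<noteq> mat 1"
    and "b < a" "b' \<le> a'"
    and eq: "a *\<^sub>R P + b *\<^sub>R (mat 1 - P) = a' *\<^sub>R P' + b' *\<^sub>R (mat 1 - P')"
  shows "a' = a \<and> b' = b \<and> P' = P"
proof -
  define M where "M = a *\<^sub>R P + b *\<^sub>R (mat 1 - P)"
  have "(M - a *\<^sub>R mat 1) ** (M - b *\<^sub>R mat 1) = ((b - a) *\<^sub>R (mat 1 - P)) ** ((a - b) *\<^sub>R P)"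
    unfolding M_def by (simp add: algebra_simps)
  also have "\<dots> = 0"
    using idempotent_complement[OF P(1)] by (simp add: matrix_scaleR_left matrix_scaleR_right)
  finally have "(M - a *\<^sub>R mat 1) ** (M - b *\<^sub>R mat 1) = 0" .
  moreover have "(M - a *\<^sub>R mat 1) ** (M - b *\<^sub>R mat 1)
      = ((a' - a) * (a' - b)) *\<^sub>R P' + ((b' - a) * (b' - b)) *\<^sub>R (mat 1 - P')"
  proof -
    have "M - c *\<^sub>R mat 1 = (a' - c) *\<^sub>R P' + (b' - c) *\<^sub>R (mat 1 - P')" for c
      unfolding M_def eq by (simp add: algebra_simps)
    then show ?thesis
      by (simp only: spectral_mult[OF P'(1)])
  qed
  ultimately have "(a' - a) * (a' - b) = 0" "(b' - a) * (b' - b) = 0"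
    using spectral_combination_eq_0[OF P'] by metis+
  then have "a' = a \<or> a' = b" "b' = a \<or> b' = b" by auto
  moreover have "a' \<noteq> b'"
  proof
    assume "a' = b'"
    then have "(a - a') *\<^sub>R P + (b - a') *\<^sub>R (mat 1 - P) = 0"
      using eq by (simp add: algebra_simps)
    then have "a - a' = 0" "b - a' = 0" by (rule spectral_combination_eq_0[OF P])+
    with \<open>b < a\<close> show False by simp
  qed
  ultimately have "a' = a" "b' = b" using \<open>b < a\<close> \<open>b' \<le> a'\<close> by auto
  with eq have "(a - b) *\<^sub>R P = (a - b) *\<^sub>R P'" by (simp add: algebra_simps)
  with \<open>a' = a\<close> \<open>b' = b\<close> \<open>b < a\<close> show ?thesis by simp
qed

lemma mpow_spectral:
  assumes "P ** P = P"
  shows "mpow (a *\<^sub>R P + b *\<^sub>R (mat 1 - P)) k = a^k *\<^sub>R P + b^k *\<^sub>R (mat 1 - P)"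
  by (induction k) (simp_all add: spectral_mult[OF assms, of a b] flip: scaleR_add_right)

lemma mexp_spectral:
  assumes "P ** P = P"
  shows "mexp (a *\<^sub>R P + b *\<^sub>R (mat 1 - P)) = exp a *\<^sub>R P + exp b *\<^sub>R (mat 1 - P)"
proof -
  have "(\<lambda>k. (a^k /\<^sub>R fact k) *\<^sub>R P + (b^k /\<^sub>R fact k) *\<^sub>R (mat 1 - P))
      sums (exp a *\<^sub>R P + exp b *\<^sub>R (mat 1 - P))"
    by (intro sums_add sums_scaleR_left exp_converges)
  then show ?thesis
    unfolding mexp_def mpow_spectral[OF assms]
    by (simp add: sums_iff scaleR_add_right divide_inverse_commute)
qed

text \<open>For symmetric \<open>M\<close> these are the two eigenvalues and, if they differ, the projection
  onto the eigenspace of the larger one; for other \<open>M\<close> the square root may be taken of a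
  negative number.\<close>

definition eig_max :: "mat2 \<Rightarrow> real" where
  "eig_max M = (trace M + sqrt ((trace M)\<^sup>2 - 4 * det M)) / 2"

definition eig_min :: "mat2 \<Rightarrow> real" where
  "eig_min M = (trace M - sqrt ((trace M)\<^sup>2 - 4 * det M)) / 2"

definition eig_proj :: "mat2 \<Rightarrow> mat2" where
  "eig_proj M = (1 / (eig_max M - eig_min M)) *\<^sub>R (M - eig_min M *\<^sub>R mat 1)"

lemma discriminant_symmetric:
  fixes M :: mat2
  assumes "transpose M = M"
  shows "(trace M)\<^sup>2 - 4 * det M = (M$1$1 - M$2$2)\<^sup>2 + 4 * (M$1$2)\<^sup>2"
  using assms by (simp add: symmetric_2_iff trace_2 det_2 power2_eq_square algebra_simps)

lemma
  assumes "transpose M = M"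
  shows eig_sum: "eig_max M + eig_min M = trace M"
    and eig_prod: "eig_max M * eig_min M = det M"
    and eig_min_le_max: "eig_min M \<le> eig_max M"
proof -
  have disc: "(trace M)\<^sup>2 - 4 * det M \<ge> 0"
    unfolding discriminant_symmetric[OF assms] by simp
  show "eig_max M + eig_min M = trace M" by (simp add: eig_max_def eig_min_def field_simps)
  show "eig_max M * eig_min M = det M"
    using disc by (simp add: eig_max_def eig_min_def field_simps power2_eq_square)
  show "eig_min M \<le> eig_max M" using disc by (simp add: eig_max_def eig_min_def)
qed

lemma eig_max_minus_min: "eig_max M - eig_min M = sqrt ((trace M)\<^sup>2 - 4 * det M)"
  by (simp add: eig_max_def eig_min_def field_simps)

lemma symmetric_eig_min_eq_max:
  assumes "transpose M = M" "eig_min M = eig_max M"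
  shows "M = eig_max M *\<^sub>R mat 1"
proof -
  have "(M$1$1 - M$2$2)\<^sup>2 + 4 * (M$1$2)\<^sup>2 = 0"
    using assms eig_max_minus_min[of M] by (simp add: discriminant_symmetric)
  then have "(M$1$1 - M$2$2)\<^sup>2 = 0" "(M$1$2)\<^sup>2 = 0" by (smt (verit) zero_le_power2)+
  then have "M$1$1 = M$2$2" "M$1$2 = 0" by simp_all
  moreover have "eig_max M = M$1$1"
    using eig_sum[OF assms(1)] assms(2) calculation by (simp add: trace_2)
  moreover have "M$2$1 = M$1$2" using assms(1) by (simp add: symmetric_2_iff)
  ultimately show ?thesis by (simp add: mat2_eq_iff)
qed

lemma
  assumes "transpose M = M" "eig_min M < eig_max M"
  shows eig_decomposition: "M = eig_max M *\<^sub>R eig_proj M + eig_min M *\<^sub>R (mat 1 - eig_proj M)"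
    and eig_proj_idempotent: "eig_proj M ** eig_proj M = eig_proj M"
    and eig_proj_symmetric: "transpose (eig_proj M) = eig_proj M"
    and eig_proj_nonzero: "eig_proj M \<noteq> 0"
    and eig_proj_ne_id: "eig_proj M \<noteq> mat 1"
proof -
  define s1 s2 where "s1 = eig_max M" and "s2 = eig_min M"
  have d: "s1 - s2 \<noteq> 0" using assms(2) by (simp add: s1_def s2_def)
  have sym: "M$2$1 = M$1$2" using assms(1) by (simp add: symmetric_2_iff)
  have tr: "s1 + s2 = M$1$1 + M$2$2" and dt: "s1 * s2 = M$1$1 * M$2$2 - M$1$2 * M$2$1"
    using eig_sum[OF assms(1)] eig_prod[OF assms(1)] by (simp_all add: s1_def s2_def trace_2 det_2)
  have P: "(s1 - s2) *\<^sub>R eig_proj M = M - s2 *\<^sub>R mat 1"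
    using d by (simp add: eig_proj_def s1_def s2_def)
  show "M = eig_max M *\<^sub>R eig_proj M + eig_min M *\<^sub>R (mat 1 - eig_proj M)"
    using P by (simp add: s1_def s2_def algebra_simps)
  have "(M - s2 *\<^sub>R mat 1) ** (M - s2 *\<^sub>R mat 1) = (s1 - s2) *\<^sub>R (M - s2 *\<^sub>R mat 1)"
  proof -
    have m22: "M$2$2 = s1 + s2 - M$1$1" using tr by simp
    have "M$1$2 * M$1$2 = (s1 - M$1$1) * (M$1$1 - s2)"
      using dt sym m22 by (simp add: algebra_simps)
    then show ?thesis
      by (simp add: mat2_eq_iff matrix_matrix_mult_2 sym m22 algebra_simps)
  qed
  then show "eig_proj M ** eig_proj M = eig_proj M"
    using d unfolding eig_proj_def s1_def[symmetric] s2_def[symmetric]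
    by (simp add: matrix_scaleR_left matrix_scaleR_right)
  show "transpose (eig_proj M) = eig_proj M"
    by (simp add: eig_proj_def symmetric_2_iff sym)
  show "eig_proj M \<noteq> 0"
  proof
    assume "eig_proj M = 0"
    then have "M$1$1 = s2" "M$2$2 = s2" using P by (auto simp: mat2_eq_iff)
    then show False using tr d by simp
  qed
  show "eig_proj M \<noteq> mat 1"
  proof
    assume "eig_proj M = mat 1"
    then have "M$1$1 = s1" "M$2$2 = s1" using P by (auto simp: mat2_eq_iff)
    then show False using tr d by simp
  qed
qed

lemma eig_bounds:
  assumes "transpose M = M" "0 < det M" "0 < trace M"
  shows "0 < eig_min M" "trace M / 2 \<le> eig_max M" "eig_max M \<le> trace M"
proof -
  define r where "r = sqrt ((trace M)\<^sup>2 - 4 * det M)"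
  have "0 \<le> (trace M)\<^sup>2 - 4 * det M" by (simp add: discriminant_symmetric[OF assms(1)])
  then have "r\<^sup>2 < (trace M)\<^sup>2" "0 \<le> r" using assms(2) by (simp_all add: r_def)
  then have "r < trace M" using assms(3) by (smt (verit) power_mono)
  with \<open>0 \<le> r\<close> show "0 < eig_min M" "trace M / 2 \<le> eig_max M" "eig_max M \<le> trace M"
    by (simp_all add: eig_min_def eig_max_def r_def[symmetric])
qed

lemma eig_proj_scaleR:
  assumes "0 < c"
  shows "eig_proj (c *\<^sub>R M) = eig_proj M"
proof -
  have "(trace (c *\<^sub>R M))\<^sup>2 - 4 * det (c *\<^sub>R M) = c\<^sup>2 * ((trace M)\<^sup>2 - 4 * det M)"
    by (simp add: trace_2 det_2 power2_eq_square algebra_simps)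
  then have "sqrt ((trace (c *\<^sub>R M))\<^sup>2 - 4 * det (c *\<^sub>R M)) = c * sqrt ((trace M)\<^sup>2 - 4 * det M)"
    using assms by (simp add: real_sqrt_mult)
  moreover have "trace (c *\<^sub>R M) = c * trace M" by (simp add: trace_2 algebra_simps)
  ultimately have "eig_min (c *\<^sub>R M) = c * eig_min M" "eig_max (c *\<^sub>R M) = c * eig_max M"
    by (simp_all add: eig_min_def eig_max_def algebra_simps)
  moreover have "c *\<^sub>R M - (c * eig_min M) *\<^sub>R mat 1 = c *\<^sub>R (M - eig_min M *\<^sub>R mat 1)"
    by (simp add: algebra_simps)
  moreover have "c * eig_max M - c * eig_min M = c * (eig_max M - eig_min M)"
    by (simp add: algebra_simps)
  ultimately show ?thesis
    using assms by (simp add: eig_proj_def)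
qed

lemma tendsto_eig_proj:
  assumes lim: "(T \<longlongrightarrow> U) F" and "eig_min U < eig_max U"
  shows "((\<lambda>x. eig_proj (T x)) \<longlongrightarrow> eig_proj U) F"
proof -
  have entries: "((\<lambda>x. T x $ i $ j) \<longlongrightarrow> U $ i $ j) F" for i j
    by (intro tendsto_vec_nth lim)
  have "((\<lambda>x. trace (T x)) \<longlongrightarrow> trace U) F" "((\<lambda>x. det (T x)) \<longlongrightarrow> det U) F"
    unfolding trace_2 det_2 by (intro tendsto_intros entries)+
  then show ?thesis
    using assms(2) unfolding eig_proj_def eig_max_def eig_min_def
    by (intro tendsto_intros lim) simp_all
qed

lemma trace_outer: "trace (outer w) = w \<bullet> w"
  by (simp add: trace_2 inner_2)

lemma det_outer: "det (outer w) = 0"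
  by (simp add: det_2)

lemma
  assumes "w \<bullet> w = 1"
  shows outer_idempotent: "outer w ** outer w = outer w"
    and outer_nonzero: "outer w \<noteq> 0"
    and outer_ne_id: "outer w \<noteq> mat 1"
    and eig_max_outer: "eig_max (outer w) = 1"
    and eig_min_outer: "eig_min (outer w) = 0"
    and eig_proj_outer: "eig_proj (outer w) = outer w"
proof -
  have w: "(w$1)\<^sup>2 + (w$2)\<^sup>2 = 1" using assms by (simp add: inner_2 power2_eq_square)
  have "w$i * w$1 * (w$1 * w$j) + w$i * w$2 * (w$2 * w$j) = w$i * w$j * ((w$1)\<^sup>2 + (w$2)\<^sup>2)" for i j
    by (simp add: power2_eq_square algebra_simps)
  then show "outer w ** outer w = outer w"
    by (simp add: mat2_eq_iff matrix_matrix_mult_2 w)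
  show "outer w \<noteq> 0" "outer w \<noteq> mat 1"
    using arg_cong[of _ _ trace] trace_outer[of w] assms by (fastforce simp: trace_2)+
  show "eig_max (outer w) = 1" "eig_min (outer w) = 0"
    by (simp_all add: eig_max_def eig_min_def trace_outer det_outer assms)
  then show "eig_proj (outer w) = outer w"
    by (simp add: eig_proj_def)
qed

lemma inner_uvec [simp]: "uvec p \<bullet> uvec p = 1"
  by (simp add: inner_2 flip: power2_eq_square)

lemma inner_vvec [simp]: "vvec p \<bullet> vvec p = 1"
  by (simp add: inner_2 flip: power2_eq_square)

lemma outer_vvec: "outer (vvec p) = mat 1 - outer (uvec p)"
  using sin_cos_squared_add[of p] by (simp add: mat2_eq_iff algebra_simps)

lemma symmetric_spectral_decomposition:
  fixes L :: mat2
  assumes "transpose L = L"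
  obtains a b P where "P ** P = P" "P \<noteq> 0" "P \<noteq> mat 1" "b \<le> a"
    "L = a *\<^sub>R P + b *\<^sub>R (mat 1 - P)"
proof (cases "eig_min L < eig_max L")
  case True
  show ?thesis
    by (rule that[OF eig_proj_idempotent[OF assms True] eig_proj_nonzero[OF assms True]
          eig_proj_ne_id[OF assms True] _ eig_decomposition[OF assms True]])
      (use True in simp)
next
  case False
  then have "L = eig_max L *\<^sub>R mat 1"
    using assms eig_min_le_max symmetric_eig_min_eq_max by force
  then have "L = eig_max L *\<^sub>R outer (uvec 0) + eig_max L *\<^sub>R (mat 1 - outer (uvec 0))"
    by (simp flip: scaleR_add_right)
  then show ?thesis
    using that outer_idempotent outer_nonzero outer_ne_id inner_uvec by blast
qed

lemma mlog_spectral: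
  assumes P: "P ** P = P" "P \<noteq> 0" "P \<noteq> mat 1" and "transpose P = P" and "b < a"
  shows "mlog (exp a *\<^sub>R P + exp b *\<^sub>R (mat 1 - P)) = a *\<^sub>R P + b *\<^sub>R (mat 1 - P)"
  unfolding mlog_def
proof (rule the_equality)
  show "transpose (a *\<^sub>R P + b *\<^sub>R (mat 1 - P)) = a *\<^sub>R P + b *\<^sub>R (mat 1 - P)
      \<and> mexp (a *\<^sub>R P + b *\<^sub>R (mat 1 - P)) = exp a *\<^sub>R P + exp b *\<^sub>R (mat 1 - P)"
    using \<open>transpose P = P\<close> by (simp add: mexp_spectral[OF P(1)] symmetric_2_iff)
next
  fix L assume L: "transpose L = L \<and> mexp L = exp a *\<^sub>R P + exp b *\<^sub>R (mat 1 - P)"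
  then obtain a' b' P' where P': "P' ** P' = P'" "P' \<noteq> 0" "P' \<noteq> mat 1"
    and "b' \<le> a'" and L_eq: "L = a' *\<^sub>R P' + b' *\<^sub>R (mat 1 - P')"
    using symmetric_spectral_decomposition by blast
  have "exp a *\<^sub>R P + exp b *\<^sub>R (mat 1 - P) = exp a' *\<^sub>R P' + exp b' *\<^sub>R (mat 1 - P')"
    using L by (simp add: L_eq mexp_spectral[OF P'(1)])
  then have "exp a' = exp a \<and> exp b' = exp b \<and> P' = P"
    using spectral_decomposition_unique[OF P P', where a = "exp a" and b = "exp b"
        and a' = "exp a'" and b' = "exp b'"] \<open>b < a\<close> \<open>b' \<le> a'\<close> by simp
  then show "L = a *\<^sub>R P + b *\<^sub>R (mat 1 - P)" by (simp add: L_eq)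
qed

lemma mlog_eig:
  assumes "transpose M = M" "0 < eig_min M" "eig_min M < eig_max M"
  shows "mlog M = ln (eig_max M) *\<^sub>R eig_proj M + ln (eig_min M) *\<^sub>R (mat 1 - eig_proj M)"
proof -
  have "M = exp (ln (eig_max M)) *\<^sub>R eig_proj M + exp (ln (eig_min M)) *\<^sub>R (mat 1 - eig_proj M)"
    using eig_decomposition[OF assms(1,3)] assms(2,3) by simp
  also have "mlog \<dots> = ln (eig_max M) *\<^sub>R eig_proj M + ln (eig_min M) *\<^sub>R (mat 1 - eig_proj M)"
    using assms eig_proj_idempotent eig_proj_nonzero eig_proj_ne_id eig_proj_symmetric
    by (intro mlog_spectral) auto
  finally show ?thesis .
qed

section \<open>Sums of rank-one matrices\<close>

definition wedge :: "real^2 \<Rightarrow> real^2 \<Rightarrow> real" where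
  "wedge a b = a$1 * b$2 - a$2 * b$1"

lemma wedge_lagrange: "(wedge a b)\<^sup>2 + (a \<bullet> b)\<^sup>2 = (a \<bullet> a) * (b \<bullet> b)"
  by (simp add: wedge_def inner_2 power2_eq_square algebra_simps)

lemma wedge_sq_le_1:
  assumes "a \<bullet> a = 1" "b \<bullet> b = 1"
  shows "(wedge a b)\<^sup>2 \<le> 1"
proof -
  have "(wedge a b)\<^sup>2 + (a \<bullet> b)\<^sup>2 = 1" using wedge_lagrange[of a b] assms by simp
  then show ?thesis using zero_le_power2[of "a \<bullet> b"] by linarith
qed

lemma wedge_eq_0_iff_aligned:
  assumes "a \<bullet> a = 1" "b \<bullet> b = 1"
  shows "wedge a b = 0 \<longleftrightarrow> aligned a b"
proof
  assume "wedge a b = 0"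
  define p where "p = a \<bullet> b"
  have "p\<^sup>2 = 1" using wedge_lagrange[of a b] assms \<open>wedge a b = 0\<close> by (simp add: p_def)
  then have "(b - p *\<^sub>R a) \<bullet> (b - p *\<^sub>R a) = 0"
    using assms by (simp add: p_def inner_diff_left inner_diff_right inner_commute power2_eq_square)
  then have "b = p *\<^sub>R a" by simp
  moreover have "p = 1 \<or> p = -1" using \<open>p\<^sup>2 = 1\<close> by (simp add: power2_eq_1_iff)
  ultimately show "aligned a b" by (auto simp: aligned_def)
next
  assume "aligned a b"
  then show "wedge a b = 0" by (auto simp: aligned_def wedge_def)
qed

lemma wedge_commute: "wedge b a = - wedge a b"
  by (simp add: wedge_def)

lemma transpose_sum_outer: "transpose (\<Sum>k\<in>K. c k *\<^sub>R outer (w k)) = (\<Sum>k\<in>K. c k *\<^sub>R outer (w k))"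
  by (simp add: symmetric_2_iff mult.commute)

lemma trace_sum_outer:
  assumes "\<And>k. k \<in> K \<Longrightarrow> w k \<bullet> w k = 1"
  shows "trace (\<Sum>k\<in>K. c k *\<^sub>R outer (w k)) = (\<Sum>k\<in>K. c k)"
proof -
  have "trace (\<Sum>k\<in>K. c k *\<^sub>R outer (w k)) = (\<Sum>k\<in>K. c k * (w k \<bullet> w k))"
    by (simp add: trace_2 inner_2 sum.distrib[symmetric] algebra_simps)
  also have "\<dots> = (\<Sum>k\<in>K. c k)" by (simp add: assms)
  finally show ?thesis .
qed

text \<open>The Cauchy--Binet formula for a sum of weighted rank-one matrices.\<close>

lemma det_sum_outer:
  "2 * det (\<Sum>k\<in>K. c k *\<^sub>R outer (w k)) = (\<Sum>k\<in>K. \<Sum>l\<in>K. c k * c l * (wedge (w k) (w l))\<^sup>2)"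
proof -
  define F where "F k l = c k * (w k$1)\<^sup>2 * (c l * (w l$2)\<^sup>2)" for k l
  define G where "G k l = c k * (w k$1 * w k$2) * (c l * (w l$1 * w l$2))" for k l
  have "(\<Sum>k\<in>K. \<Sum>l\<in>K. c k * c l * (wedge (w k) (w l))\<^sup>2) = (\<Sum>k\<in>K. \<Sum>l\<in>K. F k l + F l k - 2 * G k l)"
    unfolding F_def G_def wedge_def by (intro sum.cong refl) (simp add: power2_eq_square algebra_simps)
  also have "\<dots> = (\<Sum>k\<in>K. \<Sum>l\<in>K. F k l) + (\<Sum>k\<in>K. \<Sum>l\<in>K. F l k) - 2 * (\<Sum>k\<in>K. \<Sum>l\<in>K. G k l)"
    by (simp add: sum.distrib sum_subtractf sum_distrib_left)
  also have "(\<Sum>k\<in>K. \<Sum>l\<in>K. F l k) = (\<Sum>k\<in>K. \<Sum>l\<in>K. F k l)" by (rule sum.swap)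
  also have "(\<Sum>k\<in>K. \<Sum>l\<in>K. F k l) = (\<Sum>k\<in>K. c k *\<^sub>R outer (w k))$1$1 * (\<Sum>k\<in>K. c k *\<^sub>R outer (w k))$2$2"
    by (simp add: F_def sum_product power2_eq_square)
  also have "(\<Sum>k\<in>K. \<Sum>l\<in>K. G k l) = (\<Sum>k\<in>K. c k *\<^sub>R outer (w k))$1$2 * (\<Sum>k\<in>K. c k *\<^sub>R outer (w k))$2$1"
    by (simp add: G_def sum_product mult.commute)
  finally show ?thesis by (simp add: det_2)
qed

section \<open>Exponential growth rates\<close>

lemma tendsto_exp_mult_neg:
  assumes "c < 0"
  shows "((\<lambda>m::real. exp (m * c)) \<longlongrightarrow> 0) at_top"
proof -
  have "LIM m at_top. c * m :> at_bot"
    by (rule filterlim_tendsto_neg_mult_at_bot[OF tendsto_const assms filterlim_ident])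
  then have "LIM m at_top. m * c :> at_bot" by (simp add: mult.commute)
  from filterlim_compose[OF exp_at_bot this] show ?thesis by simp
qed

lemma tendsto_ln_div_of_exp_bounds:
  fixes f :: "real \<Rightarrow> real"
  assumes bounds: "\<forall>\<^sub>F m in at_top. a * exp (m * \<alpha>) \<le> f m \<and> f m \<le> b * exp (m * \<alpha>)" and "0 < a"
  shows "((\<lambda>m. ln (f m) / m) \<longlongrightarrow> \<alpha>) at_top"
proof (rule tendsto_sandwich[where f = "\<lambda>m. ln a / m + \<alpha>" and h = "\<lambda>m. ln b / m + \<alpha>"])
  have "((\<lambda>m::real. ln c / m + \<alpha>) \<longlongrightarrow> \<alpha>) at_top" for c
    using tendsto_add[OF tendsto_divide_0[OF tendsto_const filterlim_at_top_imp_at_infinity[OF filterlim_ident]] tendsto_const]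
    by simp
  then show "((\<lambda>m. ln a / m + \<alpha>) \<longlongrightarrow> \<alpha>) at_top" "((\<lambda>m. ln b / m + \<alpha>) \<longlongrightarrow> \<alpha>) at_top"
    by this+
  have "\<forall>\<^sub>F m in at_top. ln a / m + \<alpha> \<le> ln (f m) / m \<and> ln (f m) / m \<le> ln b / m + \<alpha>"
    using bounds eventually_gt_at_top[of 0]
  proof eventually_elim
    case (elim m)
    then have "0 < f m" "0 < b" using \<open>0 < a\<close>
      by (smt (verit) exp_gt_zero mult_pos_pos zero_less_mult_pos2)+
    then have "ln (a * exp (m * \<alpha>)) \<le> ln (f m)" "ln (f m) \<le> ln (b * exp (m * \<alpha>))"
      using elim \<open>0 < a\<close> by simp_all
    then have "ln a + m * \<alpha> \<le> ln (f m)" "ln (f m) \<le> ln b + m * \<alpha>"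
      using \<open>0 < a\<close> \<open>0 < b\<close> by (simp_all add: ln_mult)
    moreover have "ln c / m + \<alpha> = (ln c + m * \<alpha>) / m" for c
      using \<open>0 < m\<close> by (simp add: field_simps)
    ultimately show ?case
      using \<open>0 < m\<close> by (simp add: divide_right_mono)
  qed
  then show "\<forall>\<^sub>F m in at_top. ln a / m + \<alpha> \<le> ln (f m) / m" "\<forall>\<^sub>F m in at_top. ln (f m) / m \<le> ln b / m + \<alpha>"
    by (auto elim: eventually_mono)
qed

section \<open>Rank-one sums with a dominant exponent\<close>

locale dominant_outer_sum =
  fixes K :: "'k set" and e :: "'k \<Rightarrow> real" and w :: "'k \<Rightarrow> real^2" and k0 :: 'k
  assumes finite_K: "finite K" and k0_in_K: "k0 \<in> K"
    and unit: "\<And>k. k \<in> K \<Longrightarrow> w k \<bullet> w k = 1"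
    and dominant: "\<And>k. k \<in> K \<Longrightarrow> k \<noteq> k0 \<Longrightarrow> e k < e k0"
    and transversal: "\<exists>k\<in>K. \<not> aligned (w k) (w k0)"
begin

definition mu_star :: real where
  "mu_star = Max {e k | k. k \<in> K \<and> \<not> aligned (w k) (w k0)}"

definition S :: "real \<Rightarrow> mat2" where
  "S m = (\<Sum>k\<in>K. exp (m * e k) *\<^sub>R outer (w k))"

lemma e_le_top: "k \<in> K \<Longrightarrow> e k \<le> e k0"
  using dominant by (cases "k = k0") (auto intro: less_imp_le)

lemma e_le_mu_star: "k \<in> K \<Longrightarrow> \<not> aligned (w k) (w k0) \<Longrightarrow> e k \<le> mu_star"
  unfolding mu_star_def using finite_K by (intro Max_ge) auto

lemma mu_star_attained:
  obtains ks where "ks \<in> K" "wedge (w k0) (w ks) \<noteq> 0" "e ks = mu_star"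
proof -
  have "mu_star \<in> {e k | k. k \<in> K \<and> \<not> aligned (w k) (w k0)}"
    unfolding mu_star_def using finite_K transversal by (intro Max_in) auto
  then obtain ks where ks: "ks \<in> K" "\<not> aligned (w ks) (w k0)" "e ks = mu_star" by auto
  then have "wedge (w k0) (w ks) \<noteq> 0"
    using wedge_eq_0_iff_aligned[OF unit unit] wedge_commute by (metis k0_in_K neg_equal_0_iff_equal)
  with ks that show thesis by blast
qed

lemma mu_star_less_top: "mu_star < e k0"
proof -
  obtain ks where ks: "ks \<in> K" "wedge (w k0) (w ks) \<noteq> 0" "e ks = mu_star"
    by (rule mu_star_attained)
  moreover have "ks \<noteq> k0" using ks(2) by (auto simp: wedge_def)
  ultimately show ?thesis using dominant[of ks] by simp
qed

lemma pair_bound: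
  assumes "k \<in> K" "l \<in> K" "wedge (w k) (w l) \<noteq> 0"
  shows "e k + e l \<le> e k0 + mu_star"
proof -
  have "\<not> aligned (w k) (w k0) \<or> \<not> aligned (w l) (w k0)"
    using assms(3) by (auto simp: aligned_def wedge_def)
  then show ?thesis
    using e_le_mu_star[of k] e_le_mu_star[of l] e_le_top[of k] e_le_top[of l] assms(1,2)
    by fastforce
qed

lemma symmetric_S: "transpose (S m) = S m"
  by (simp add: S_def transpose_sum_outer)

lemma trace_S_bounds:
  assumes "0 \<le> m"
  shows "exp (m * e k0) \<le> trace (S m)" "trace (S m) \<le> card K * exp (m * e k0)"
proof -
  have tr: "trace (S m) = (\<Sum>k\<in>K. exp (m * e k))"
    unfolding S_def using unit by (rule trace_sum_outer)
  show "exp (m * e k0) \<le> trace (S m)"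
    unfolding tr by (rule member_le_sum[OF k0_in_K]) (auto simp: finite_K)
  show "trace (S m) \<le> card K * exp (m * e k0)"
    unfolding tr by (rule sum_bounded_above) (use assms e_le_top in \<open>auto intro: mult_left_mono\<close>)
qed

lemma det_S_lower:
  obtains c where "0 < c" "\<And>m. c * exp (m * (e k0 + mu_star)) \<le> det (S m)"
proof -
  obtain ks where ks: "ks \<in> K" "wedge (w k0) (w ks) \<noteq> 0" "e ks = mu_star"
    by (rule mu_star_attained)
  let ?f = "\<lambda>m k l. exp (m * e k) * exp (m * e l) * (wedge (w k) (w l))\<^sup>2"
  have "(wedge (w k0) (w ks))\<^sup>2 / 2 * exp (m * (e k0 + mu_star)) \<le> det (S m)" for m
  proof -
    have "?f m k0 ks \<le> (\<Sum>l\<in>K. ?f m k0 l)"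
      by (rule member_le_sum[OF ks(1)]) (auto simp: finite_K)
    also have "\<dots> \<le> (\<Sum>k\<in>K. \<Sum>l\<in>K. ?f m k l)"
      by (rule member_le_sum[OF k0_in_K, where f = "\<lambda>k. \<Sum>l\<in>K. ?f m k l"])
        (auto simp: finite_K intro: sum_nonneg)
    also have "\<dots> = 2 * det (S m)"
      by (simp add: S_def det_sum_outer)
    finally have "?f m k0 ks \<le> 2 * det (S m)" .
    moreover have "?f m k0 ks = (wedge (w k0) (w ks))\<^sup>2 * exp (m * (e k0 + mu_star))"
      using ks(3) by (simp add: distrib_left exp_add)
    ultimately show ?thesis by simp
  qed
  then show thesis
    using ks(2) by (intro that[of "(wedge (w k0) (w ks))\<^sup>2 / 2"]) auto
qed

lemma det_S_upper:
  assumes "0 \<le> m"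
  shows "det (S m) \<le> (real (card K))\<^sup>2 * exp (m * (e k0 + mu_star))"
proof -
  let ?E = "exp (m * (e k0 + mu_star))"
  have summand: "exp (m * e k) * exp (m * e l) * (wedge (w k) (w l))\<^sup>2 \<le> ?E"
    if "k \<in> K" "l \<in> K" for k l
  proof (cases "wedge (w k) (w l) = 0")
    case False
    have "exp (m * e k) * exp (m * e l) \<le> ?E"
      using pair_bound[OF that False] assms by (simp add: mult_left_mono flip: exp_add distrib_left)
    moreover have "(wedge (w k) (w l))\<^sup>2 \<le> 1"
      using unit that by (intro wedge_sq_le_1)
    moreover have "exp (m * e k) * exp (m * e l) * (wedge (w k) (w l))\<^sup>2 \<le> exp (m * e k) * exp (m * e l)"
      using calculation(2) by (intro mult_left_le) simp_all
    ultimately show ?thesis by linarith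
  qed simp
  have "2 * det (S m) \<le> card K * (card K * ?E)"
    unfolding S_def det_sum_outer
    by (rule sum_bounded_above, rule sum_bounded_above) (use summand in auto)
  moreover have "0 \<le> real (card K) * (real (card K) * ?E)" by simp
  ultimately show ?thesis unfolding power2_eq_square mult.assoc by linarith
qed

lemma det_S_pos: "0 < det (S m)"
proof -
  obtain c where "0 < c" "\<And>m. c * exp (m * (e k0 + mu_star)) \<le> det (S m)"
    by (rule det_S_lower) blast
  then show ?thesis by (smt (verit) exp_gt_zero mult_pos_pos)
qed

lemma eig_S_bounds:
  assumes "0 \<le> m"
  shows "0 < eig_min (S m)" "0 < eig_max (S m)" "exp (m * e k0) / 2 \<le> eig_max (S m)"
    "eig_max (S m) \<le> card K * exp (m * e k0)"
proof -
  have "0 < trace (S m)" using trace_S_bounds(1)[OF assms] by (smt (verit) exp_gt_zero)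
  note eig = eig_bounds[OF symmetric_S det_S_pos this]
  show "0 < eig_min (S m)" by (rule eig(1))
  then show "0 < eig_max (S m)" using eig_min_le_max[OF symmetric_S] by (smt (verit))
  show "exp (m * e k0) / 2 \<le> eig_max (S m)" "eig_max (S m) \<le> card K * exp (m * e k0)"
    using eig(2,3) trace_S_bounds[OF assms] by linarith+
qed

lemma tendsto_ln_eig_max: "((\<lambda>m. ln (eig_max (S m)) / m) \<longlongrightarrow> e k0) at_top"
proof (rule tendsto_ln_div_of_exp_bounds[where a = "1/2" and b = "card K"])
  show "\<forall>\<^sub>F m in at_top. 1/2 * exp (m * e k0) \<le> eig_max (S m) \<and> eig_max (S m) \<le> card K * exp (m * e k0)"
    using eventually_ge_at_top[of 0] by eventually_elim (use eig_S_bounds in auto)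
qed simp

lemma tendsto_ln_det_S: "((\<lambda>m. ln (det (S m)) / m) \<longlongrightarrow> e k0 + mu_star) at_top"
proof -
  obtain c where "0 < c" "\<And>m. c * exp (m * (e k0 + mu_star)) \<le> det (S m)"
    by (rule det_S_lower) blast
  moreover have "\<forall>\<^sub>F m in at_top. c * exp (m * (e k0 + mu_star)) \<le> det (S m)
      \<and> det (S m) \<le> (real (card K))\<^sup>2 * exp (m * (e k0 + mu_star))"
    using eventually_ge_at_top[of 0] by eventually_elim (use calculation det_S_upper in auto)
  ultimately show ?thesis by (intro tendsto_ln_div_of_exp_bounds) auto
qed

lemma tendsto_ln_eig_min: "((\<lambda>m. ln (eig_min (S m)) / m) \<longlongrightarrow> mu_star) at_top"
proof -
  have "\<forall>\<^sub>F m in at_top. ln (det (S m)) / m - ln (eig_max (S m)) / m = ln (eig_min (S m)) / m"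
    using eventually_ge_at_top[of 0]
  proof eventually_elim
    case (elim m)
    have "ln (det (S m)) = ln (eig_max (S m)) + ln (eig_min (S m))"
      using ln_mult_pos[OF eig_S_bounds(2,1)[OF elim]] by (simp add: eig_prod[OF symmetric_S])
    then show ?case by (simp add: add_divide_distrib)
  qed
  from Lim_transform_eventually[OF tendsto_diff[OF tendsto_ln_det_S tendsto_ln_eig_max] this]
  show ?thesis by simp
qed

lemma eventually_eig_min_less_max: "\<forall>\<^sub>F m in at_top. eig_min (S m) < eig_max (S m)"
proof -
  have "\<forall>\<^sub>F m in at_top. (mu_star + e k0) / 2 < ln (eig_max (S m)) / m"
    using tendsto_ln_eig_max mu_star_less_top by (intro order_tendstoD(1)) auto
  moreover have "\<forall>\<^sub>F m in at_top. ln (eig_min (S m)) / m < (mu_star + e k0) / 2"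
    using tendsto_ln_eig_min mu_star_less_top by (intro order_tendstoD(2)) auto
  ultimately show ?thesis using eventually_gt_at_top[of 0]
  proof eventually_elim
    case (elim m)
    then have "ln (eig_min (S m)) < ln (eig_max (S m))"
      by (smt (verit) divide_strict_right_mono)
    then show ?case
      using eig_S_bounds(1,2)[of m] \<open>0 < m\<close> by simp
  qed
qed

lemma tendsto_scaled_S: "((\<lambda>m. exp (- (m * e k0)) *\<^sub>R S m) \<longlongrightarrow> outer (w k0)) at_top"
proof -
  have "((\<lambda>m. exp (m * (e k - e k0))) \<longlongrightarrow> (if k = k0 then 1 else 0)) at_top" if "k \<in> K" for k
    using dominant[OF that] tendsto_exp_mult_neg[of "e k - e k0"] by auto
  then have "((\<lambda>m. \<Sum>k\<in>K. exp (m * (e k - e k0)) *\<^sub>R outer (w k))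
      \<longlongrightarrow> (\<Sum>k\<in>K. (if k = k0 then 1 else 0) *\<^sub>R outer (w k))) at_top"
    by (intro tendsto_sum tendsto_scaleR tendsto_const)
  moreover have "(\<Sum>k\<in>K. (if k = k0 then 1 else 0) *\<^sub>R outer (w k))
      = (\<Sum>k\<in>K. if k = k0 then outer (w k) else 0)"
    by (rule sum.cong) auto
  moreover have "\<dots> = outer (w k0)"
    using finite_K k0_in_K by simp
  moreover have "exp (- (m * e k0)) *\<^sub>R S m = (\<Sum>k\<in>K. exp (m * (e k - e k0)) *\<^sub>R outer (w k))" for m
    by (simp add: S_def scaleR_sum_right right_diff_distrib exp_diff exp_minus field_simps)
  ultimately show ?thesis by simp
qed

lemma tendsto_eig_proj_S: "((\<lambda>m. eig_proj (S m)) \<longlongrightarrow> outer (w k0)) at_top"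
proof -
  have "((\<lambda>m. eig_proj (exp (- (m * e k0)) *\<^sub>R S m)) \<longlongrightarrow> eig_proj (outer (w k0))) at_top"
    using tendsto_scaled_S
    by (rule tendsto_eig_proj) (simp add: eig_max_outer eig_min_outer unit k0_in_K)
  then show ?thesis
    by (simp add: eig_proj_scaleR eig_proj_outer unit k0_in_K)
qed

theorem tendsto_mlog_S:
  "((\<lambda>m. (1 / m) *\<^sub>R mlog (S m)) \<longlongrightarrow> e k0 *\<^sub>R outer (w k0) + mu_star *\<^sub>R (mat 1 - outer (w k0))) at_top"
proof (rule Lim_transform_eventually)
  show "((\<lambda>m. (ln (eig_max (S m)) / m) *\<^sub>R eig_proj (S m) + (ln (eig_min (S m)) / m) *\<^sub>R (mat 1 - eig_proj (S m)))
      \<longlongrightarrow> e k0 *\<^sub>R outer (w k0) + mu_star *\<^sub>R (mat 1 - outer (w k0))) at_top"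
    by (intro tendsto_intros tendsto_ln_eig_max tendsto_ln_eig_min tendsto_eig_proj_S)
  show "\<forall>\<^sub>F m in at_top. (ln (eig_max (S m)) / m) *\<^sub>R eig_proj (S m)
      + (ln (eig_min (S m)) / m) *\<^sub>R (mat 1 - eig_proj (S m)) = (1 / m) *\<^sub>R mlog (S m)"
    using eventually_eig_min_less_max eventually_ge_at_top[of 0]
  proof eventually_elim
    case (elim m)
    then show ?case
      by (simp add: mlog_eig[OF symmetric_S eig_S_bounds(1)] scaleR_add_right)
  qed
qed

end

section \<open>The log-exp-supremum\<close>

definition eigval :: "('i \<Rightarrow> real) \<Rightarrow> ('i \<Rightarrow> real) \<Rightarrow> 'i \<times> bool \<Rightarrow> real" where
  "eigval lam mu k = (if snd k then lam (fst k) else mu (fst k))"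

definition eigvec :: "('i \<Rightarrow> real) \<Rightarrow> 'i \<times> bool \<Rightarrow> real^2" where
  "eigvec \<phi> k = (if snd k then uvec (\<phi> (fst k)) else vvec (\<phi> (fst k)))"

lemma vvec_not_aligned_uvec: "\<not> aligned (vvec p) (uvec p)"
proof
  assume "aligned (vvec p) (uvec p)"
  then have "sin p = 0 \<and> cos p = 0" by (auto simp: aligned_def vec_eq_iff forall_2)
  then show False using sin_cos_squared_add[of p] by simp
qed

lemma aligned_refl [simp]: "aligned a a"
  by (simp add: aligned_def)

lemma transversal_eigvals:
  fixes n :: nat
  shows
  "{eigval lam mu k |k. k \<in> {1..n} \<times> UNIV \<and> \<not> aligned (eigvec \<phi> k) (eigvec \<phi> (1, True))}
    = {lam i |i. i \<in> {2..n} \<and> \<not> aligned (uvec (\<phi> i)) (uvec (\<phi> 1))}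
      \<union> {mu i |i. i \<in> {1..n} \<and> \<not> aligned (vvec (\<phi> i)) (uvec (\<phi> 1))}"
  (is "?L = ?U \<union> ?V")
proof (intro equalityI subsetI)
  fix x assume "x \<in> ?L"
  then obtain i b where "i \<in> {1..n}" "\<not> aligned (eigvec \<phi> (i, b)) (uvec (\<phi> 1))" "x = eigval lam mu (i, b)"
    by (auto simp: eigvec_def)
  then show "x \<in> ?U \<union> ?V"
    by (cases b; cases "i = 1") (auto simp: eigval_def eigvec_def)
next
  fix x assume "x \<in> ?U \<union> ?V"
  then consider (lam) i where "i \<in> {2..n}" "\<not> aligned (uvec (\<phi> i)) (uvec (\<phi> 1))" "x = lam i"
    | (mu) i where "i \<in> {1..n}" "\<not> aligned (vvec (\<phi> i)) (uvec (\<phi> 1))" "x = mu i"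
    by blast
  then show "x \<in> ?L"
  proof cases
    case lam
    then show ?thesis by (intro CollectI exI[of _ "(i, True)"]) (simp add: eigval_def eigvec_def)
  next
    case mu
    then show ?thesis by (intro CollectI exI[of _ "(i, False)"]) (simp add: eigval_def eigvec_def)
  qed
qed

lemma sum_mexp_eq_sum_eigen:
  "(\<Sum>i\<in>I. mexp (m *\<^sub>R (lam i *\<^sub>R outer (uvec (\<phi> i)) + mu i *\<^sub>R outer (vvec (\<phi> i)))))
    = (\<Sum>k\<in>I \<times> UNIV. exp (m * eigval lam mu k) *\<^sub>R outer (eigvec \<phi> k))"
proof -
  have "mexp (m *\<^sub>R (lam i *\<^sub>R outer (uvec (\<phi> i)) + mu i *\<^sub>R outer (vvec (\<phi> i))))
      = (\<Sum>b\<in>UNIV. exp (m * eigval lam mu (i, b)) *\<^sub>R outer (eigvec \<phi> (i, b)))" for i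
    by (simp add: outer_vvec mexp_spectral outer_idempotent scaleR_add_right UNIV_bool
        eigval_def eigvec_def add.commute)
  then show ?thesis by (simp add: sum.cartesian_product)
qed

lemma dominant_outer_sum_eigenpairs:
  fixes n :: nat
  assumes "1 \<le> n" "\<And>i. i \<in> {2..n} \<Longrightarrow> lam i < lam 1" "\<And>i. i \<in> {1..n} \<Longrightarrow> mu i < lam 1"
  shows "dominant_outer_sum ({1..n} \<times> UNIV) (eigval lam mu) (eigvec \<phi>) (1, True)"
proof unfold_locales
  show "finite ({1..n} \<times> (UNIV :: bool set))" "(1, True) \<in> {1..n} \<times> UNIV"
    using \<open>1 \<le> n\<close> by simp_all
  show "eigvec \<phi> k \<bullet> eigvec \<phi> k = 1" for k by (simp add: eigvec_def)
  show "eigval lam mu k < eigval lam mu (1, True)" if "k \<in> {1..n} \<times> UNIV" "k \<noteq> (1, True)" for k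
  proof -
    obtain i b where "k = (i, b)" by force
    with that show ?thesis
      using assms(2,3)[of i] by (cases b) (auto simp: eigval_def)
  qed
  show "\<exists>k\<in>{1..n} \<times> UNIV. \<not> aligned (eigvec \<phi> k) (eigvec \<phi> (1, True))"
    using \<open>1 \<le> n\<close> vvec_not_aligned_uvec by (intro bexI[of _ "(1, False)"]) (auto simp: eigvec_def)
qed

theorem theorem1:
  fixes n :: nat and X :: "nat \<Rightarrow> real^2^2"
    and lam mu \<phi> :: "nat \<Rightarrow> real" and mustar :: real
  assumes "n \<ge> 1"
    and spec: "\<And>i. i \<in> {1..n} \<Longrightarrow>
       X i = lam i *\<^sub>R outer (uvec (\<phi> i)) + mu i *\<^sub>R outer (vvec (\<phi> i))"
    and ord: "\<And>i. i \<in> {1..n} \<Longrightarrow> mu i \<le> lam i"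
    and ang: "\<And>i. i \<in> {1..n} \<Longrightarrow> -(pi/2) \<le> \<phi> i \<and> \<phi> i \<le> pi/2"
    and uniq_lam: "\<And>i. i \<in> {2..n} \<Longrightarrow> lam i < lam 1"
    and uniq_mu: "\<And>i. i \<in> {1..n} \<Longrightarrow> mu i < lam 1"
    and mustar_def: "mustar = Max ({lam i | i. i \<in> {2..n} \<and> \<not> aligned (uvec (\<phi> i)) (uvec (\<phi> 1))}
                          \<union> {mu i | i. i \<in> {1..n} \<and> \<not> aligned (vvec (\<phi> i)) (uvec (\<phi> 1))})"
  shows "is_LES n X (lam 1 *\<^sub>R outer (uvec (\<phi> 1)) + mustar *\<^sub>R outer (vvec (\<phi> 1)))"
proof -
  interpret dominant_outer_sum "{1..n} \<times> UNIV" "eigval lam mu" "eigvec \<phi>" "(1, True)"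
    using \<open>n \<ge> 1\<close> uniq_lam uniq_mu by (rule dominant_outer_sum_eigenpairs)
  have "mu_star = mustar"
    unfolding mu_star_def mustar_def transversal_eigvals ..
  moreover have "(\<Sum>i\<in>{1..n}. mexp (m *\<^sub>R X i)) = S m" for m
    unfolding S_def sum_mexp_eq_sum_eigen[symmetric] by (rule sum.cong) (simp_all add: spec)
  ultimately show ?thesis
    using tendsto_mlog_S unfolding is_LES_def by (simp add: eigval_def eigvec_def outer_vvec)
qed

end
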